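(* The weak Krull dimension of $\mathcal{S}'(\mathbb{Z}^{d})$ is $1$: finitely generated proper prime ideals of $\mathcal{S}'(\mathbb{Z}^{d})$ exist, and if $\mathfrak{p}_1\subseteq\mathfrak{p}_2$ are finitely generated proper prime ideals of $\mathcal{S}'(\mathbb{Z}^{d})$, then $\mathfrak{p}_1=\mathfrak{p}_2$ (so every chain of distinct finitely generated proper prime ideals consists of exactly one ideal).
   Context: For $\mathbf{n}=(n_1,\dots,n_d)\in\mathbb{Z}^d$ write $\|\mathbf{n}\|:=|n_1|+\cdots+|n_d|$. $\mathcal{S}'(\mathbb{Z}^{d})$ denotes the set of all maps $f:\mathbb{Z}^d\to\mathbb{C}$ of at most polynomial growth, i.e. for which there exist a real $M>0$ and an integer $m\geq 0$ with $|f(\mathbf{n})|\leq M(1+\|\mathbf{n}\|)^m$ for all $\mathbf{n}\in\mathbb{Z}^d$. It is a commutative unital ring under pointwise addition and multiplication. The weak Krull dimension of a commutative ring is the supremum of the lengths of chains of distinct proper finitely generated prime ideals, where (as in the paper) the length of a chain is counted as the number of ideals in it. *)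

theory Defs
  imports "HOL-Analysis.Analysis" "HOL-Algebra.Ideal"
begin

text \<open>The l1-norm on Z^d, with Z^d rendered as int ^ 'd for a finite index type 'd (d = CARD('d)).\<close>
definition l1norm :: "int ^ 'd \<Rightarrow> int" where
  "l1norm n = (\<Sum>i\<in>UNIV. \<bar>n $ i\<bar>)"

text \<open>S'(Z^d): maps of at most polynomial growth.\<close>
definition tempered :: "(int ^ 'd \<Rightarrow> complex) set" where
  "tempered = {f. \<exists>M::real. M > 0 \<and> (\<exists>m::nat. \<forall>n. cmod (f n) \<le> M * (1 + real_of_int (l1norm n)) ^ m)}"

definition SZ :: "(int ^ 'd \<Rightarrow> complex) ring" where
  "SZ = \<lparr>carrier = tempered,
         monoid.mult = (\<lambda>f g x. f x * g x),
         one = (\<lambda>x. 1),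
         zero = (\<lambda>x. 0),
         add = (\<lambda>f g x. f x + g x)\<rparr>"

definition fg_proper_prime :: "('a, 'b) ring_scheme \<Rightarrow> 'a set \<Rightarrow> bool" where
  "fg_proper_prime R P \<longleftrightarrow> primeideal P R \<and> P \<noteq> carrier R \<and>
     (\<exists>A. finite A \<and> A \<subseteq> carrier R \<and> P = Idl\<^bsub>R\<^esub> A)"

end

theory Submission
  imports Defs
begin

text \<open>The finitely generated proper prime ideals of \<open>S'(\<int>\<^sup>d)\<close> are exactly the ideals
  \<open>{f. f a = 0}\<close> of the points \<open>a\<close>, and these are pairwise incomparable.
  If finitely many generators \<open>f\<^sub>i\<close> of a prime ideal \<open>P\<close> have a common zero \<open>a\<close>, then
  \<open>\<delta>\<^sub>a (1 - \<delta>\<^sub>a) = 0\<close> with \<open>\<delta>\<^sub>a \<notin> P\<close> forces \<open>1 - \<delta>\<^sub>a \<in> P\<close>, and \<open>1 - \<delta>\<^sub>a\<close> generates the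
  ideal of \<open>a\<close>. Otherwise \<open>G = \<Sum>\<^sub>i |f\<^sub>i|\<^sup>2\<close> is a strictly positive element of \<open>P\<close>, and
  every element \<open>h\<close> of \<open>P\<close> satisfies \<open>|h|\<^sup>2 \<le> |k| G\<close> for some tempered \<open>k\<close>. Primality puts
  the fourth root of \<open>G\<close> into \<open>P\<close>, and the estimate for it shows that \<open>1/G\<close> is
  tempered, so \<open>P\<close> contains a unit.\<close>

definition weight :: "int ^ 'd \<Rightarrow> real" where
  "weight n = 1 + real_of_int (l1norm n)"

lemma weight_ge_1: "weight n \<ge> 1"
  unfolding weight_def l1norm_def by (simp add: sum_nonneg)

lemma weight_power_mono: "weight n ^ m \<le> weight n ^ (m + k)"
  using weight_ge_1[of n] by (intro power_increasing) auto

lemma tempered_iff_weight: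
  "f \<in> tempered \<longleftrightarrow> (\<exists>M m. \<forall>n. cmod (f n) \<le> M * weight n ^ m)"
proof
  assume "\<exists>M m. \<forall>n. cmod (f n) \<le> M * weight n ^ m"
  then obtain M m where M: "\<And>n. cmod (f n) \<le> M * weight n ^ m" by blast
  have "cmod (f n) \<le> max M 1 * weight n ^ m" for n
    using M[of n] mult_right_mono[of M "max M 1" "weight n ^ m"] weight_ge_1[of n]
    by (simp add: order_trans)
  then show "f \<in> tempered"
    unfolding tempered_def weight_def by (intro CollectI exI[of _ "max M 1"]) auto
qed (auto simp: tempered_def weight_def)

lemma tempered_weightE:
  assumes "f \<in> tempered"
  obtains M m where "M \<ge> 0" "\<And>n. cmod (f n) \<le> M * weight n ^ m"
proof -
  from assms obtain M m where "M > 0" "\<And>n. cmod (f n) \<le> M * weight n ^ m"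
    unfolding tempered_def weight_def by blast
  then show ?thesis using that[of M m] by simp
qed

lemma tempered_norm_le:
  assumes "f \<in> tempered" "\<And>n. cmod (g n) \<le> cmod (f n)"
  shows "g \<in> tempered"
  using assms unfolding tempered_iff_weight by (meson order_trans)

lemma tempered_const: "(\<lambda>n. c) \<in> tempered"
  unfolding tempered_iff_weight by (intro exI[of _ "cmod c"] exI[of _ 0]) simp

lemma tempered_cnj: "f \<in> tempered \<Longrightarrow> (\<lambda>n. cnj (f n)) \<in> tempered"
  by (rule tempered_norm_le) auto

lemma tempered_of_real_norm: "f \<in> tempered \<Longrightarrow> (\<lambda>n. complex_of_real (cmod (f n))) \<in> tempered"
  by (rule tempered_norm_le) auto

lemma tempered_add:
  assumes "f \<in> tempered" "g \<in> tempered"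
  shows "(\<lambda>n. f n + g n) \<in> tempered"
proof -
  obtain M m where M: "M \<ge> 0" "\<And>n. cmod (f n) \<le> M * weight n ^ m"
    using tempered_weightE[OF assms(1)] by blast
  obtain K k where K: "K \<ge> 0" "\<And>n. cmod (g n) \<le> K * weight n ^ k"
    using tempered_weightE[OF assms(2)] by blast
  have "cmod (f n + g n) \<le> (M + K) * weight n ^ (m + k)" for n
  proof -
    have "cmod (f n + g n) \<le> M * weight n ^ (m + k) + K * weight n ^ (k + m)"
      using norm_triangle_ineq[of "f n" "g n"] M(2)[of n] K(2)[of n]
        mult_left_mono[OF weight_power_mono[of n m k] M(1)]
        mult_left_mono[OF weight_power_mono[of n k m] K(1)] by linarith
    then show ?thesis by (simp add: algebra_simps add.commute)
  qed
  then show ?thesis unfolding tempered_iff_weight by blast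
qed

lemma tempered_mult:
  assumes "f \<in> tempered" "g \<in> tempered"
  shows "(\<lambda>n. f n * g n) \<in> tempered"
proof -
  obtain M m where M: "M \<ge> 0" "\<And>n. cmod (f n) \<le> M * weight n ^ m"
    using tempered_weightE[OF assms(1)] by blast
  obtain K k where K: "K \<ge> 0" "\<And>n. cmod (g n) \<le> K * weight n ^ k"
    using tempered_weightE[OF assms(2)] by blast
  have "cmod (f n * g n) \<le> (M * K) * weight n ^ (m + k)" for n
  proof -
    have "cmod (f n * g n) \<le> (M * weight n ^ m) * (K * weight n ^ k)"
      unfolding norm_mult using weight_ge_1[of n] M K by (intro mult_mono) auto
    then show ?thesis by (simp add: power_add mult_ac)
  qed
  then show ?thesis unfolding tempered_iff_weight by blast
qed

lemma tempered_sqrt_norm: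
  assumes "f \<in> tempered"
  shows "(\<lambda>n. complex_of_real (sqrt (cmod (f n)))) \<in> tempered"
proof (rule tempered_norm_le)
  show "(\<lambda>n. 1 + complex_of_real (cmod (f n))) \<in> tempered"
    by (intro tempered_add tempered_const tempered_of_real_norm assms)
  have "sqrt x \<le> 1 + x" if "x \<ge> 0" for x :: real
  proof -
    have "sqrt x \<le> sqrt ((1 + x)\<^sup>2)"
      using that by (intro real_sqrt_le_mono) (simp add: power2_eq_square algebra_simps)
    then show ?thesis using that by simp
  qed
  then show "cmod (complex_of_real (sqrt (cmod (f n)))) \<le> cmod (1 + complex_of_real (cmod (f n)))" for n
    by (metis norm_ge_zero norm_of_real of_real_1 of_real_add abs_of_nonneg add_nonneg_nonneg
        real_sqrt_ge_zero zero_le_one)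
qed

lemma SZ_simps [simp]:
  "carrier SZ = tempered" "(\<otimes>\<^bsub>SZ\<^esub>) = (\<lambda>f g n. f n * g n)" "(\<oplus>\<^bsub>SZ\<^esub>) = (\<lambda>f g n. f n + g n)"
  "\<one>\<^bsub>SZ\<^esub> = (\<lambda>n. 1)" "\<zero>\<^bsub>SZ\<^esub> = (\<lambda>n. 0)"
  by (simp_all add: SZ_def)

lemma cring_SZ: "cring SZ"
proof (rule cringI)
  show "abelian_group SZ"
  proof (rule abelian_groupI)
    fix f assume "f \<in> carrier SZ"
    then have "(\<lambda>n. - f n) \<in> tempered" using tempered_norm_le[of f "\<lambda>n. - f n"] by simp
    then show "\<exists>g\<in>carrier SZ. g \<oplus>\<^bsub>SZ\<^esub> f = \<zero>\<^bsub>SZ\<^esub>" by (intro bexI[of _ "\<lambda>n. - f n"]) auto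
  qed (auto intro: tempered_add tempered_const simp: algebra_simps)
  show "comm_monoid SZ"
    by (rule comm_monoidI) (auto intro: tempered_mult tempered_const simp: algebra_simps)
qed (auto simp: algebra_simps)

lemma SZ_a_inv: "f \<in> tempered \<Longrightarrow> \<ominus>\<^bsub>SZ\<^esub> f = (\<lambda>n. - f n)"
proof -
  assume f: "f \<in> tempered"
  interpret cring SZ by (rule cring_SZ)
  have "(\<lambda>n. - f n) \<in> tempered" by (rule tempered_norm_le[OF f]) simp
  then show ?thesis using f by (intro minus_equality) auto
qed

lemma ideal_SZI:
  assumes "I \<subseteq> tempered" "(\<lambda>n. 0) \<in> I"
    and add: "\<And>f g. f \<in> I \<Longrightarrow> g \<in> I \<Longrightarrow> (\<lambda>n. f n + g n) \<in> I"
    and mult: "\<And>f h. f \<in> I \<Longrightarrow> h \<in> tempered \<Longrightarrow> (\<lambda>n. h n * f n) \<in> I"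
  shows "ideal I SZ"
proof (rule idealI)
  show "ring SZ" by (rule cring.axioms(1)[OF cring_SZ])
  show "subgroup I (add_monoid SZ)"
  proof
    fix f assume "f \<in> I"
    then have "(\<lambda>n. - f n) \<in> I" "f \<in> tempered"
      using mult[OF _ tempered_const, of f "- 1"] assms(1) by auto
    moreover have "inv\<^bsub>add_monoid SZ\<^esub> f = \<ominus>\<^bsub>SZ\<^esub> f" by (simp add: a_inv_def)
    ultimately show "inv\<^bsub>add_monoid SZ\<^esub> f \<in> I" using SZ_a_inv[of f] by simp
  qed (use assms in auto)
qed (use mult in \<open>auto simp: mult.commute\<close>)

definition vanishing_ideal :: "int ^ 'd \<Rightarrow> (int ^ 'd \<Rightarrow> complex) set" where
  "vanishing_ideal a = {f \<in> tempered. f a = 0}"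

lemma tempered_indicator: "(\<lambda>n. indicator S n :: complex) \<in> tempered"
  by (rule tempered_norm_le[OF tempered_const[of 1]]) (simp add: indicator_def)

lemma tempered_one_minus_indicator: "(\<lambda>n. 1 - indicator S n :: complex) \<in> tempered"
  by (rule tempered_norm_le[OF tempered_const[of 1]]) (simp add: indicator_def)

lemma ideal_vanishing_ideal: "ideal (vanishing_ideal a) SZ"
  by (rule ideal_SZI) (auto simp: vanishing_ideal_def intro: tempered_add tempered_mult tempered_const)

lemma primeideal_vanishing_ideal: "primeideal (vanishing_ideal a) SZ"
proof (rule primeidealI)
  show "ideal (vanishing_ideal a) SZ" by (rule ideal_vanishing_ideal)
  have "(\<lambda>n. 1) \<notin> vanishing_ideal a" by (simp add: vanishing_ideal_def)
  then show "carrier SZ \<noteq> vanishing_ideal a" using tempered_const by auto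
qed (auto simp: vanishing_ideal_def cring_SZ)

lemma vanishing_ideal_eq_genideal:
  "vanishing_ideal a = Idl\<^bsub>SZ\<^esub> {\<lambda>n. 1 - indicator {a} n}"
proof -
  interpret cring SZ by (rule cring_SZ)
  let ?e = "\<lambda>n. 1 - indicator {a} n :: complex"
  show ?thesis
  proof
    show "Idl\<^bsub>SZ\<^esub> {?e} \<subseteq> vanishing_ideal a"
      by (rule genideal_minimal[OF ideal_vanishing_ideal])
        (simp add: vanishing_ideal_def tempered_one_minus_indicator)
    show "vanishing_ideal a \<subseteq> Idl\<^bsub>SZ\<^esub> {?e}"
    proof
      fix f assume f: "f \<in> vanishing_ideal a"
      interpret ideal "Idl\<^bsub>SZ\<^esub> {?e}" SZ
        using tempered_one_minus_indicator by (intro genideal_ideal) auto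
      have "f \<otimes>\<^bsub>SZ\<^esub> ?e \<in> Idl\<^bsub>SZ\<^esub> {?e}"
        using f tempered_one_minus_indicator
        by (intro I_l_closed genideal_self') (auto simp: vanishing_ideal_def)
      moreover have "f \<otimes>\<^bsub>SZ\<^esub> ?e = f"
        using f by (auto simp: vanishing_ideal_def indicator_def)
      ultimately show "f \<in> Idl\<^bsub>SZ\<^esub> {?e}" by simp
    qed
  qed
qed

lemma fg_proper_prime_vanishing_ideal: "fg_proper_prime SZ (vanishing_ideal a)"
proof -
  interpret primeideal "vanishing_ideal a" SZ by (rule primeideal_vanishing_ideal)
  show ?thesis
    unfolding fg_proper_prime_def using primeideal_axioms I_notcarr tempered_one_minus_indicator
    by (auto simp: vanishing_ideal_eq_genideal intro!: exI[of _ "{\<lambda>n. 1 - indicator {a} n}"])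
qed

lemma vanishing_ideal_subset_imp_eq:
  assumes "vanishing_ideal a \<subseteq> vanishing_ideal b"
  shows "a = b"
proof (rule ccontr)
  assume "a \<noteq> b"
  then have "(\<lambda>n. indicator {b} n :: complex) \<in> vanishing_ideal a"
    using tempered_indicator by (simp add: vanishing_ideal_def)
  then show False using assms by (auto simp: vanishing_ideal_def)
qed

lemma prime_genideal_with_common_zero:
  assumes "primeideal (Idl\<^bsub>SZ\<^esub> A) SZ" "A \<subseteq> tempered" "\<And>f. f \<in> A \<Longrightarrow> f a = 0"
  shows "Idl\<^bsub>SZ\<^esub> A = vanishing_ideal a"
proof
  interpret P: primeideal "Idl\<^bsub>SZ\<^esub> A" SZ by (fact assms(1))
  let ?\<delta> = "\<lambda>n. indicator {a} n :: complex"
  show sub: "Idl\<^bsub>SZ\<^esub> A \<subseteq> vanishing_ideal a"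
    using assms(2,3) by (intro P.genideal_minimal ideal_vanishing_ideal) (auto simp: vanishing_ideal_def)
  have "?\<delta> \<notin> Idl\<^bsub>SZ\<^esub> A" using sub by (auto simp: vanishing_ideal_def)
  moreover have "?\<delta> \<otimes>\<^bsub>SZ\<^esub> (\<lambda>n. 1 - ?\<delta> n) \<in> Idl\<^bsub>SZ\<^esub> A"
  proof -
    have "?\<delta> \<otimes>\<^bsub>SZ\<^esub> (\<lambda>n. 1 - ?\<delta> n) = \<zero>\<^bsub>SZ\<^esub>" by (auto simp: indicator_def)
    then show ?thesis using additive_subgroup.zero_closed[OF P.is_additive_subgroup] by simp
  qed
  ultimately have "(\<lambda>n. 1 - ?\<delta> n) \<in> Idl\<^bsub>SZ\<^esub> A"
    using P.I_prime tempered_indicator tempered_one_minus_indicator by fastforce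
  then show "vanishing_ideal a \<subseteq> Idl\<^bsub>SZ\<^esub> A"
    unfolding vanishing_ideal_eq_genideal by (intro P.genideal_minimal P.is_ideal) auto
qed

lemma sum_norm_square_mem_ideal:
  assumes "ideal I SZ" "finite A" "A \<subseteq> I"
  shows "(\<lambda>n. complex_of_real (\<Sum>f\<in>A. (cmod (f n))\<^sup>2)) \<in> I"
  using assms(2,3)
proof (induction A rule: finite_induct)
  case empty
  interpret ideal I SZ by (fact assms(1))
  show ?case using additive_subgroup.zero_closed[OF is_additive_subgroup] by simp
next
  case (insert g A)
  interpret ideal I SZ by (fact assms(1))
  have "g \<in> I" using insert.prems by simp
  then have "g \<otimes>\<^bsub>SZ\<^esub> (\<lambda>n. cnj (g n)) \<in> I"
    using Icarr tempered_cnj by (intro I_r_closed) auto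
  then have "(g \<otimes>\<^bsub>SZ\<^esub> (\<lambda>n. cnj (g n))) \<oplus>\<^bsub>SZ\<^esub> (\<lambda>n. complex_of_real (\<Sum>f\<in>A. (cmod (f n))\<^sup>2)) \<in> I"
    using insert by (intro additive_subgroup.a_closed[OF is_additive_subgroup]) auto
  then show ?case
    using insert.hyps by (simp add: complex_norm_square[symmetric])
qed

text \<open>A tempered substitute for ``\<open>h\<^sup>2\<close> is divisible by \<open>G\<close>'': unlike the ideal
  generated by \<open>G\<close>, it contains every tempered \<open>f\<close> with \<open>|f|\<^sup>2 \<le> G\<close>.\<close>

definition dominated_by :: "(int ^ 'd \<Rightarrow> real) \<Rightarrow> (int ^ 'd \<Rightarrow> complex) set" where
  "dominated_by G = {h \<in> tempered. \<exists>k\<in>tempered. \<forall>n. (cmod (h n))\<^sup>2 \<le> cmod (k n) * G n}"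

lemma ideal_dominated_by:
  fixes G :: "int ^ 'd \<Rightarrow> real"
  assumes G: "\<And>n. G n \<ge> 0"
  shows "ideal (dominated_by G) SZ"
proof (rule ideal_SZI)
  show "dominated_by G \<subseteq> tempered" "(\<lambda>n. 0) \<in> dominated_by G"
    using G by (auto simp: dominated_by_def intro!: bexI[of _ "\<lambda>n. 0"] tempered_const)
next
  fix f g assume "f \<in> dominated_by G" "g \<in> dominated_by G"
  then obtain kf kg where f: "f \<in> tempered" "kf \<in> tempered" "\<And>n. (cmod (f n))\<^sup>2 \<le> cmod (kf n) * G n"
    and g: "g \<in> tempered" "kg \<in> tempered" "\<And>n. (cmod (g n))\<^sup>2 \<le> cmod (kg n) * G n"
    unfolding dominated_by_def by blast
  let ?k = "\<lambda>n. 2 * complex_of_real (cmod (kf n)) + 2 * complex_of_real (cmod (kg n))"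
  have "?k \<in> tempered"
    using f g by (intro tempered_add tempered_mult tempered_const tempered_of_real_norm)
  have k_norm: "cmod (?k n) = 2 * cmod (kf n) + 2 * cmod (kg n)" for n
  proof -
    have "cmod (?k n) = cmod (complex_of_real (2 * cmod (kf n) + 2 * cmod (kg n)))" by simp
    also have "\<dots> = 2 * cmod (kf n) + 2 * cmod (kg n)" unfolding norm_of_real by simp
    finally show ?thesis .
  qed
  moreover have "(cmod (f n + g n))\<^sup>2 \<le> cmod (?k n) * G n" for n
  proof -
    have "(cmod (f n + g n))\<^sup>2 \<le> (cmod (f n) + cmod (g n))\<^sup>2"
      by (intro power_mono norm_triangle_ineq) auto
    also have "\<dots> \<le> 2 * (cmod (f n))\<^sup>2 + 2 * (cmod (g n))\<^sup>2"
      using zero_le_square[of "cmod (f n) - cmod (g n)"] by (simp add: power2_eq_square algebra_simps)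
    also have "\<dots> \<le> 2 * (cmod (kf n) * G n) + 2 * (cmod (kg n) * G n)"
      using f(3)[of n] g(3)[of n] by linarith
    also have "\<dots> = cmod (?k n) * G n"
      unfolding k_norm by (simp add: algebra_simps)
    finally show ?thesis .
  qed
  moreover have "(\<lambda>n. f n + g n) \<in> tempered" using f(1) g(1) by (rule tempered_add)
  ultimately show "(\<lambda>n. f n + g n) \<in> dominated_by G"
    using \<open>?k \<in> tempered\<close> unfolding dominated_by_def by (intro CollectI conjI bexI[of _ ?k]) auto
next
  fix f h :: "int ^ 'd \<Rightarrow> complex" assume "f \<in> dominated_by G" "h \<in> tempered"
  then obtain k where f: "f \<in> tempered" "k \<in> tempered" "\<And>n. (cmod (f n))\<^sup>2 \<le> cmod (k n) * G n"
    unfolding dominated_by_def by blast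
  let ?k = "\<lambda>n. h n * cnj (h n) * k n"
  have "?k \<in> tempered" using f \<open>h \<in> tempered\<close> by (intro tempered_mult tempered_cnj)
  moreover have "(cmod (h n * f n))\<^sup>2 \<le> cmod (?k n) * G n" for n
  proof -
    have "(cmod (h n * f n))\<^sup>2 = (cmod (h n))\<^sup>2 * (cmod (f n))\<^sup>2"
      by (simp add: norm_mult power_mult_distrib)
    also have "\<dots> \<le> (cmod (h n))\<^sup>2 * (cmod (k n) * G n)"
      by (intro mult_left_mono f(3)) auto
    also have "\<dots> = cmod (?k n) * G n"
      by (simp add: norm_mult power2_eq_square)
    finally show ?thesis .
  qed
  moreover have "(\<lambda>n. h n * f n) \<in> tempered" using \<open>h \<in> tempered\<close> f(1) by (rule tempered_mult)
  ultimately show "(\<lambda>n. h n * f n) \<in> dominated_by G"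
    unfolding dominated_by_def by (intro CollectI conjI bexI[of _ ?k]) auto
qed

lemma tempered_inverse_if_fourth_root_dominated:
  assumes G: "\<And>n. G n > 0"
    and "(\<lambda>n. complex_of_real (sqrt (sqrt (G n)))) \<in> dominated_by G"
  shows "(\<lambda>n. complex_of_real (1 / G n)) \<in> tempered"
proof -
  obtain k where k: "k \<in> tempered" "\<And>n. (sqrt (sqrt (G n)))\<^sup>2 \<le> cmod (k n) * G n"
    using assms(2) by (auto simp: dominated_by_def)
  show ?thesis
  proof (rule tempered_norm_le)
    show "(\<lambda>n. k n * k n) \<in> tempered" by (rule tempered_mult[OF k(1) k(1)])
    fix n
    define s where "s = sqrt (G n)"
    have s: "s > 0" "G n = s\<^sup>2" using G[of n] by (auto simp: s_def)
    have "s \<le> cmod (k n) * G n" using k(2)[of n] G[of n] unfolding s_def by simp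
    then have "s \<le> cmod (k n) * s\<^sup>2" using s(2) by simp
    then have "1 \<le> cmod (k n) * s" using s(1) by (simp add: power2_eq_square)
    then have "1 \<le> (cmod (k n))\<^sup>2 * G n"
      using s by (simp add: one_le_power power_mult_distrib flip: power_mult_distrib)
    then have bound: "1 / G n \<le> (cmod (k n))\<^sup>2" using s by (simp add: divide_le_eq)
    have "cmod (complex_of_real (1 / G n)) = 1 / G n"
      using G[of n] unfolding norm_of_real by simp
    also have "\<dots> \<le> cmod (k n * k n)"
      using bound by (simp add: norm_mult power2_eq_square)
    finally show "cmod (complex_of_real (1 / G n)) \<le> cmod (k n * k n)" .
  qed
qed

lemma (in primeideal) square_mem_imp_mem: "a \<in> carrier R \<Longrightarrow> a \<otimes> a \<in> I \<Longrightarrow> a \<in> I"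
  using I_prime by blast

lemma fourth_root_mem_primeideal:
  assumes P: "primeideal P SZ" and G_mem: "(\<lambda>n. complex_of_real (G n)) \<in> P"
    and G: "\<And>n. G n \<ge> 0"
  shows "(\<lambda>n. complex_of_real (sqrt (sqrt (G n)))) \<in> P"
proof -
  interpret P: primeideal P SZ by (fact P)
  let ?root2 = "\<lambda>n. complex_of_real (sqrt (G n))"
  let ?root4 = "\<lambda>n. complex_of_real (sqrt (sqrt (G n)))"
  have root2: "?root2 = (\<lambda>n. complex_of_real (sqrt (cmod (complex_of_real (G n)))))"
    and root4: "?root4 = (\<lambda>n. complex_of_real (sqrt (cmod (?root2 n))))"
    using G by auto
  have G_tempered: "(\<lambda>n. complex_of_real (G n)) \<in> tempered"
    using P.Icarr[OF G_mem] by simp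
  have root2_tempered: "?root2 \<in> tempered"
    unfolding root2 by (rule tempered_sqrt_norm[OF G_tempered])
  have root4_tempered: "?root4 \<in> tempered"
    unfolding root4 by (rule tempered_sqrt_norm[OF root2_tempered])
  have root2_square: "?root2 \<otimes>\<^bsub>SZ\<^esub> ?root2 = (\<lambda>n. complex_of_real (G n))"
    and root4_square: "?root4 \<otimes>\<^bsub>SZ\<^esub> ?root4 = ?root2"
    using G by (auto simp flip: of_real_mult)
  have "?root2 \<in> P"
    using P.square_mem_imp_mem[of ?root2] root2_tempered G_mem
    unfolding root2_square[symmetric] by simp
  then show "?root4 \<in> P"
    using P.square_mem_imp_mem[of ?root4] root4_tempered
    unfolding root4_square[symmetric] by simp
qed

lemma norm_square_le_imp_dominated_by:
  "f \<in> tempered \<Longrightarrow> (\<And>n. (cmod (f n))\<^sup>2 \<le> G n) \<Longrightarrow> f \<in> dominated_by G"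
  unfolding dominated_by_def by (auto intro!: bexI[of _ "\<lambda>n. 1"] tempered_const)

lemma prime_genideal_has_common_zero:
  assumes P: "primeideal (Idl\<^bsub>SZ\<^esub> A) SZ" and A: "finite A" "A \<subseteq> tempered"
  shows "\<exists>a. \<forall>f\<in>A. f a = 0"
proof (rule ccontr)
  interpret P: primeideal "Idl\<^bsub>SZ\<^esub> A" SZ by (fact P)
  assume "\<nexists>a. \<forall>f\<in>A. f a = 0"
  define G where "G n = (\<Sum>f\<in>A. (cmod (f n))\<^sup>2)" for n
  have G_pos: "G n > 0" for n
  proof -
    obtain f where "f \<in> A" "f n \<noteq> 0" using \<open>\<nexists>a. _\<close> by blast
    then show ?thesis
      unfolding G_def using A(1) by (intro sum_pos2[of _ f]) auto
  qed
  have G_mem: "(\<lambda>n. complex_of_real (G n)) \<in> Idl\<^bsub>SZ\<^esub> A"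
    unfolding G_def using A by (intro sum_norm_square_mem_ideal P.is_ideal P.genideal_self) auto
  have "A \<subseteq> dominated_by G"
    unfolding G_def using A by (auto intro!: norm_square_le_imp_dominated_by member_le_sum)
  then have P_dominated: "Idl\<^bsub>SZ\<^esub> A \<subseteq> dominated_by G"
    using G_pos by (intro P.genideal_minimal ideal_dominated_by) (auto simp: less_imp_le)
  have "(\<lambda>n. complex_of_real (sqrt (sqrt (G n)))) \<in> Idl\<^bsub>SZ\<^esub> A"
    using G_pos by (intro fourth_root_mem_primeideal[OF P G_mem] less_imp_le)
  then have inverse: "(\<lambda>n. complex_of_real (1 / G n)) \<in> tempered"
    using P_dominated G_pos by (intro tempered_inverse_if_fourth_root_dominated) auto
  have "(\<lambda>n. complex_of_real (1 / G n)) \<otimes>\<^bsub>SZ\<^esub> (\<lambda>n. complex_of_real (G n)) = \<one>\<^bsub>SZ\<^esub>"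
    using G_pos by (simp add: fun_eq_iff less_imp_neq[symmetric] flip: of_real_mult)
  then have "\<one>\<^bsub>SZ\<^esub> \<in> Idl\<^bsub>SZ\<^esub> A" using P.I_l_closed[OF G_mem] inverse by (metis SZ_simps(1))
  then show False using P.one_imp_carrier P.I_notcarr by simp
qed

lemma fg_proper_prime_iff_vanishing_ideal:
  "fg_proper_prime SZ P \<longleftrightarrow> (\<exists>a. P = vanishing_ideal a)"
proof
  assume "fg_proper_prime SZ P"
  then obtain A where A: "finite A" "A \<subseteq> tempered" "P = Idl\<^bsub>SZ\<^esub> A" and "primeideal P SZ"
    by (auto simp: fg_proper_prime_def)
  then obtain a where "\<forall>f\<in>A. f a = 0" using prime_genideal_has_common_zero by blast
  then show "\<exists>a. P = vanishing_ideal a"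
    using A \<open>primeideal P SZ\<close> prime_genideal_with_common_zero by blast
qed (auto intro: fg_proper_prime_vanishing_ideal)

theorem theorem4p6:
  shows "(\<exists>P. fg_proper_prime (SZ :: (int ^ 'd::finite \<Rightarrow> complex) ring) P) \<and>
         (\<forall>P1 P2. fg_proper_prime (SZ :: (int ^ 'd \<Rightarrow> complex) ring) P1 \<and>
                  fg_proper_prime (SZ :: (int ^ 'd \<Rightarrow> complex) ring) P2 \<and> P1 \<subseteq> P2 \<longrightarrow> P1 = P2)"
  using fg_proper_prime_vanishing_ideal
  by (auto simp: fg_proper_prime_iff_vanishing_ideal dest: vanishing_ideal_subset_imp_eq)

end
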